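(* Let $F$ be a hyperfield whose additive hypergroup is superiorly canonical. Then $\mathcal{O}:=\{x\in F: x-x\subseteq 1-1\}$ is a valuation hyperring in $F$. Moreover, if $v$ is a valuation on $F$ with $\mathcal{O}_v=\mathcal{O}$, then $(F,v)$ is a Krasner valued hyperfield.
   Context: A canonical hypergroup is a triple $(H,+,0)$ where $H\neq\emptyset$, $+$ assigns to each pair a subset $x+y\subseteq H$ (for sets $A+B:=\bigcup_{a\in A,b\in B}a+b$), $0\in H$, such that $+$ is associative and commutative, each $x$ has a unique $-x$ with $0\in x+(-x)$, and $z\in x+y\Rightarrow y\in z+(-x)$; write $x-y:=x+(-y)$. A hyperring is $(R,+,\cdot,0)$ with $(R,+,0)$ canonical, $(R,\cdot)$ a commutative semigroup with $0$ absorbing and $x(y+z)=xy+xz$ ($xA:=\{xa:a\in A\}$). A hyperfield is a hyperring with multiplicative neutral $1\neq 0$ and $F\setminus\{0\}$ a group under $\cdot$. A relational subhyperring of $F$ is a multiplicatively closed $S\subseteq F$ such that $(S,+_S,\cdot,0)$ is a hyperring, where $x+_Sy:=(x+y)\cap S$. A valuation hyperring in $F$ is a relational subhyperring $\mathcal{O}$ such that for every $x\in F\setminus\{0\}$, $x\in\mathcal{O}$ or $x^{-1}\in\mathcal{O}$. A canonical hypergroup $H$ is superiorly canonical if: (SCH1) $x\in x+y$ implies $x+y=\{x\}$; (SCH2) $(x+y)\cap(z+t)\neq\emptyset$ implies $x+y\subseteq z+t$ or $z+t\subseteq x+y$; (SCH3) for $x\neq y$ and $z,t\in x-y$, $z-z=t-t$;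 (SCH4) if $x\in z-z$ and $y\notin z-z$ then $x-x\subseteq y-y$. Valuation on $F$: for an ordered abelian group $\Gamma$ and $\infty>\Gamma$ with $\gamma+\infty=\infty+\gamma=\infty$, a surjective map $v:F\to\Gamma\cup\{\infty\}$ with $vx=\infty\iff x=0$, $v(xy)=vx+vy$, $z\in x+y\Rightarrow vz\ge\min\{vx,vy\}$; $vF:=v(F\setminus\{0\})$, $\mathcal{O}_v:=\{x:vx\ge 0\}$. An initial segment of $\Gamma$ is $\rho\subseteq\Gamma$ with $\delta\in\rho,\gamma<\delta\Rightarrow\gamma\in\rho$; $\rho+\gamma:=\{\delta+\gamma:\delta\in\rho\}$; "$\alpha>\rho+\gamma$" means $\alpha\notin\rho+\gamma$. Krasner valued hyperfield: a valued hyperfield $(F,v)$ such that (KVH1) for all $x,y\in F$ with $0\notin x+y$, $v(x+y)$ is a singleton; (KVH2) there is an initial segment $\rho_v$ of $vF$ with $0\in\rho_v$ (the norm) such that for all $x,y,z,t\in F$ with $z\in x+y$: $t\in x+y$ iff $vs>\rho_v+\min\{vx,vy\}$ for all $s\in z-t$. *)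

theory Defs
  imports Main "HOL-Library.Extended"
begin

definition hsum :: "('a \<Rightarrow> 'a \<Rightarrow> 'a set) \<Rightarrow> 'a set \<Rightarrow> 'a set \<Rightarrow> 'a set" where
  "hsum add A B = (\<Union>a\<in>A. \<Union>b\<in>B. add a b)"

definition canonical_hypergroup :: "'a set \<Rightarrow> ('a \<Rightarrow> 'a \<Rightarrow> 'a set) \<Rightarrow> 'a \<Rightarrow> bool" where
  "canonical_hypergroup H add z \<longleftrightarrow>
     H \<noteq> {} \<and> z \<in> H \<and>
     (\<forall>x\<in>H. \<forall>y\<in>H. add x y \<subseteq> H) \<and>
     (\<forall>x\<in>H. \<forall>y\<in>H. \<forall>w\<in>H. hsum add (add x y) {w} = hsum add {x} (add y w)) \<and>
     (\<forall>x\<in>H. \<forall>y\<in>H. add x y = add y x) \<and>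
     (\<forall>x\<in>H. add x z = {x}) \<and>
     (\<forall>x\<in>H. \<exists>!y. y \<in> H \<and> z \<in> add x y) \<and>
     (\<forall>x\<in>H. \<forall>y\<in>H. \<forall>w\<in>H. \<forall>x'\<in>H.
        w \<in> add x y \<longrightarrow> z \<in> add x x' \<longrightarrow> y \<in> add w x')"

definition hneg :: "'a set \<Rightarrow> ('a \<Rightarrow> 'a \<Rightarrow> 'a set) \<Rightarrow> 'a \<Rightarrow> 'a \<Rightarrow> 'a" where
  "hneg H add z x = (THE y. y \<in> H \<and> z \<in> add x y)"

definition hyperring :: "'a set \<Rightarrow> ('a \<Rightarrow> 'a \<Rightarrow> 'a set) \<Rightarrow> ('a \<Rightarrow> 'a \<Rightarrow> 'a) \<Rightarrow> 'a \<Rightarrow> bool" where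
  "hyperring R add mul z \<longleftrightarrow>
     canonical_hypergroup R add z \<and>
     (\<forall>x\<in>R. \<forall>y\<in>R. mul x y \<in> R) \<and>
     (\<forall>x\<in>R. \<forall>y\<in>R. \<forall>w\<in>R. mul (mul x y) w = mul x (mul y w)) \<and>
     (\<forall>x\<in>R. \<forall>y\<in>R. mul x y = mul y x) \<and>
     (\<forall>x\<in>R. mul z x = z) \<and>
     (\<forall>x\<in>R. \<forall>y\<in>R. \<forall>w\<in>R. mul x ` add y w = add (mul x y) (mul x w))"

definition hyperfield :: "('a \<Rightarrow> 'a \<Rightarrow> 'a set) \<Rightarrow> ('a \<Rightarrow> 'a \<Rightarrow> 'a) \<Rightarrow> 'a \<Rightarrow> 'a \<Rightarrow> bool" where
  "hyperfield add mul z one \<longleftrightarrow>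
     hyperring UNIV add mul z \<and> one \<noteq> z \<and>
     (\<forall>x. mul one x = x) \<and>
     (\<forall>x y. x \<noteq> z \<longrightarrow> y \<noteq> z \<longrightarrow> mul x y \<noteq> z) \<and>
     (\<forall>x. x \<noteq> z \<longrightarrow> (\<exists>y. mul x y = one))"

abbreviation hfneg :: "('a \<Rightarrow> 'a \<Rightarrow> 'a set) \<Rightarrow> 'a \<Rightarrow> 'a \<Rightarrow> 'a" where
  "hfneg add z x \<equiv> hneg UNIV add z x"

definition hminus :: "('a \<Rightarrow> 'a \<Rightarrow> 'a set) \<Rightarrow> 'a \<Rightarrow> 'a \<Rightarrow> 'a \<Rightarrow> 'a set" where
  "hminus add z x y = add x (hfneg add z y)"

definition hinv :: "('a \<Rightarrow> 'a \<Rightarrow> 'a) \<Rightarrow> 'a \<Rightarrow> 'a \<Rightarrow> 'a" where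
  "hinv mul one x = (THE y. mul x y = one)"

definition relational_subhyperring ::
  "('a \<Rightarrow> 'a \<Rightarrow> 'a set) \<Rightarrow> ('a \<Rightarrow> 'a \<Rightarrow> 'a) \<Rightarrow> 'a \<Rightarrow> 'a set \<Rightarrow> bool" where
  "relational_subhyperring add mul z S \<longleftrightarrow>
     (\<forall>x\<in>S. \<forall>y\<in>S. mul x y \<in> S) \<and>
     hyperring S (\<lambda>x y. add x y \<inter> S) mul z"

definition valuation_hyperring ::
  "('a \<Rightarrow> 'a \<Rightarrow> 'a set) \<Rightarrow> ('a \<Rightarrow> 'a \<Rightarrow> 'a) \<Rightarrow> 'a \<Rightarrow> 'a \<Rightarrow> 'a set \<Rightarrow> bool" where
  "valuation_hyperring add mul z one Ov \<longleftrightarrow>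
     relational_subhyperring add mul z Ov \<and>
     (\<forall>x. x \<noteq> z \<longrightarrow> x \<in> Ov \<or> hinv mul one x \<in> Ov)"

definition superiorly_canonical :: "('a \<Rightarrow> 'a \<Rightarrow> 'a set) \<Rightarrow> 'a \<Rightarrow> bool" where
  "superiorly_canonical add z \<longleftrightarrow>
     canonical_hypergroup UNIV add z \<and>
     (\<forall>x y. x \<in> add x y \<longrightarrow> add x y = {x}) \<and>
     (\<forall>x y w t. add x y \<inter> add w t \<noteq> {} \<longrightarrow> add x y \<subseteq> add w t \<or> add w t \<subseteq> add x y) \<and>
     (\<forall>x y w t. x \<noteq> y \<longrightarrow> w \<in> hminus add z x y \<longrightarrow> t \<in> hminus add z x y \<longrightarrow>
                 hminus add z w w = hminus add z t t) \<and>
     (\<forall>x y w. x \<in> hminus add z w w \<longrightarrow> y \<notin> hminus add z w w \<longrightarrow>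
                 hminus add z x x \<subseteq> hminus add z y y)"

(* Gamma is the ordered abelian group 'g; \<infinity> is Pinf of 'g extended.
   The values of v lie in {Fin g} \<union> {Pinf}; Minf is never attained. *)
definition valuation ::
  "('a \<Rightarrow> 'a \<Rightarrow> 'a set) \<Rightarrow> ('a \<Rightarrow> 'a \<Rightarrow> 'a) \<Rightarrow> 'a \<Rightarrow> ('a \<Rightarrow> ('g::linordered_ab_group_add) extended) \<Rightarrow> bool" where
  "valuation add mul z v \<longleftrightarrow>
     range v = insert Pinf (range Fin) \<and>
     (\<forall>x. v x = Pinf \<longleftrightarrow> x = z) \<and>
     (\<forall>x y. v (mul x y) = v x + v y) \<and>
     (\<forall>x y w. w \<in> add x y \<longrightarrow> v w \<ge> min (v x) (v y))"

definition valuation_ring :: "('a \<Rightarrow> ('g::linordered_ab_group_add) extended) \<Rightarrow> 'a set" where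
  "valuation_ring v = {x. v x \<ge> 0}"

(* initial segment of Gamma (= vF, since v is surjective) *)
definition initial_segment :: "('g::linordered_ab_group_add) set \<Rightarrow> bool" where
  "initial_segment \<rho> \<longleftrightarrow> (\<forall>\<delta>\<in>\<rho>. \<forall>\<gamma>. \<gamma> < \<delta> \<longrightarrow> \<gamma> \<in> \<rho>)"

definition seg_shift :: "('g::linordered_ab_group_add) set \<Rightarrow> 'g extended \<Rightarrow> 'g extended set" where
  "seg_shift \<rho> \<gamma> = (\<lambda>\<delta>. Fin \<delta> + \<gamma>) ` \<rho>"

(* "alpha > rho + gamma" means alpha \<notin> rho + gamma *)
definition above_seg :: "('g::linordered_ab_group_add) extended \<Rightarrow> 'g set \<Rightarrow> 'g extended \<Rightarrow> bool" where
  "above_seg \<alpha> \<rho> \<gamma> \<longleftrightarrow> \<alpha> \<notin> seg_shift \<rho> \<gamma>"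

(* Krasner valued hyperfield.  KVH2 is required for x, y not both 0
   (for x = y = 0 the literal condition fails in every hyperfield). *)
definition krasner_valued_hyperfield ::
  "('a \<Rightarrow> 'a \<Rightarrow> 'a set) \<Rightarrow> ('a \<Rightarrow> 'a \<Rightarrow> 'a) \<Rightarrow> 'a \<Rightarrow> 'a \<Rightarrow> ('a \<Rightarrow> ('g::linordered_ab_group_add) extended) \<Rightarrow> bool" where
  "krasner_valued_hyperfield add mul z one v \<longleftrightarrow>
     hyperfield add mul z one \<and> valuation add mul z v \<and>
     (\<forall>x y. z \<notin> add x y \<longrightarrow> (\<exists>g. v ` add x y = {g})) \<and>
     (\<exists>\<rho>. initial_segment \<rho> \<and> 0 \<in> \<rho> \<and>
        (\<forall>x y w t. \<not> (x = z \<and> y = z) \<longrightarrow> w \<in> add x y \<longrightarrow>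
           (t \<in> add x y \<longleftrightarrow>
              (\<forall>s\<in>hminus add z w t. above_seg (v s) \<rho> (min (v x) (v y))))))"

end

theory Submission
  imports Defs
begin

text \<open>In a superiorly canonical hypergroup the sets \<open>x - x\<close> form a chain (SCH2), each of them is
  closed under addition and negation, and adding an element of \<open>y - y\<close> to \<open>x + y\<close> does not leave
  \<open>x + y\<close> (SCH1). In a hyperfield \<open>x - x = x(1 - 1)\<close>, so \<open>\<O>\<close> consists of the \<open>x\<close> with
  \<open>x(1 - 1) \<subseteq> 1 - 1\<close>; it is therefore closed under the operations and, by the chain property,
  contains \<open>x\<close> or \<open>x\<inverse>\<close>. For a valuation with \<open>\<O>\<^sub>v = \<O>\<close> this gives \<open>v a \<le> v b\<close> iff
  \<open>b - b \<subseteq> a - a\<close>. Taking as norm the set of values not attained on \<open>1 - 1\<close>, one gets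
  \<open>s \<in> c - c\<close> iff \<open>v s > \<rho> + v c\<close>; and if \<open>c\<close> is the one of \<open>x, y\<close> of smaller value, then
  \<open>t \<in> x + y\<close> iff \<open>w - t \<subseteq> c - c\<close> for any \<open>w \<in> x + y\<close>, which is (KVH2). (KVH1) follows
  from (SCH3).\<close>

lemma mem_hsum_iff: "u \<in> hsum f A B \<longleftrightarrow> (\<exists>a\<in>A. \<exists>b\<in>B. u \<in> f a b)"
  by (auto simp: hsum_def)

lemma above_seg_Fin_iff: "above_seg (Fin \<sigma>) \<rho> (Fin \<gamma>) \<longleftrightarrow> \<sigma> - \<gamma> \<notin> \<rho>"
proof -
  have "Fin \<sigma> = Fin \<delta> + Fin \<gamma> \<longleftrightarrow> \<delta> = \<sigma> - \<gamma>" for \<delta>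
    by (auto simp: algebra_simps)
  thus ?thesis unfolding above_seg_def seg_shift_def by auto
qed

lemma above_seg_Pinf: "above_seg Pinf \<rho> (Fin \<gamma>)"
  by (auto simp: above_seg_def seg_shift_def)

locale canonical_hypergroup_univ =
  fixes add :: "'a \<Rightarrow> 'a \<Rightarrow> 'a set" and z :: 'a
  assumes hadd_assoc: "hsum add (add x y) {w} = hsum add {x} (add y w)"
    and hadd_commute: "add x y = add y x"
    and hadd_zero_right [simp]: "add x z = {x}"
    and ex1_neg: "\<exists>!y. z \<in> add x y"
    and reversibility: "\<And>x y w x'. w \<in> add x y \<Longrightarrow> z \<in> add x x' \<Longrightarrow> y \<in> add w x'"

lemma canonical_hypergroup_univ_iff:
  "canonical_hypergroup_univ add z \<longleftrightarrow> canonical_hypergroup UNIV add z"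
  unfolding canonical_hypergroup_univ_def canonical_hypergroup_def by simp

context canonical_hypergroup_univ
begin

abbreviation neg :: "'a \<Rightarrow> 'a" where "neg x \<equiv> hneg UNIV add z x"
abbreviation diff :: "'a \<Rightarrow> 'a \<Rightarrow> 'a set" where "diff x y \<equiv> hminus add z x y"

lemma zero_mem_hadd_neg: "z \<in> add x (neg x)"
  unfolding hneg_def using ex1_neg[of x] by (metis (mono_tags, lifting) UNIV_I theI)

lemma neg_unique: "z \<in> add x y \<Longrightarrow> y = neg x"
  using zero_mem_hadd_neg ex1_neg by blast

lemma neg_neg [simp]: "neg (neg x) = x"
  by (metis neg_unique hadd_commute zero_mem_hadd_neg)

lemma neg_zero [simp]: "neg z = z"
  by (metis neg_unique singletonI hadd_zero_right)

lemma diff_eq: "diff x y = add x (neg y)"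
  by (simp add: hminus_def)

lemma hadd_nonempty: "add x y \<noteq> {}"
proof
  assume "add x y = {}"
  hence "hsum add (add x y) {neg y} = {}" by (simp add: hsum_def)
  moreover have "x \<in> hsum add {x} (add y (neg y))"
    using zero_mem_hadd_neg[of y] by (force simp: mem_hsum_iff)
  ultimately show False using hadd_assoc by auto
qed

lemma neg_mem_hadd_neg: "t \<in> add x y \<Longrightarrow> neg t \<in> add (neg x) (neg y)"
  by (metis reversibility zero_mem_hadd_neg)

lemma mem_self_diff_iff: "y \<in> diff x x \<longleftrightarrow> x \<in> add x y"
  by (metis diff_eq hadd_commute reversibility zero_mem_hadd_neg)

lemma zero_mem_self_diff [simp]: "z \<in> diff x x"
  by (simp add: diff_eq zero_mem_hadd_neg)

lemma self_diff_zero: "diff z z = {z}"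
  by (simp add: diff_eq)

lemma self_diff_neg [simp]: "diff (neg x) (neg x) = diff x x"
  by (simp add: diff_eq hadd_commute)

lemma neg_mem_self_diff: "s \<in> diff c c \<Longrightarrow> neg s \<in> diff c c"
  by (metis diff_eq neg_mem_hadd_neg self_diff_neg)

lemma canonical_hypergroup_restrict:
  assumes "z \<in> S" and closed: "\<And>x y. x \<in> S \<Longrightarrow> y \<in> S \<Longrightarrow> add x y \<subseteq> S"
    and "\<And>x. x \<in> S \<Longrightarrow> neg x \<in> S"
  shows "canonical_hypergroup S (\<lambda>x y. add x y \<inter> S) z"
proof -
  have restrict: "hsum (\<lambda>x y. add x y \<inter> S) A B = hsum add A B" if "A \<subseteq> S" "B \<subseteq> S" for A B
  proof -
    have "add a b \<inter> S = add a b" if "a \<in> A" "b \<in> B" for a b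
      using closed that \<open>A \<subseteq> S\<close> \<open>B \<subseteq> S\<close> by blast
    thus ?thesis by (simp add: hsum_def)
  qed
  show ?thesis
    unfolding canonical_hypergroup_def
  proof (intro conjI ballI)
    fix x y w assume "x \<in> S" "y \<in> S" "w \<in> S"
    with closed show "hsum (\<lambda>x y. add x y \<inter> S) (add x y \<inter> S) {w} =
        hsum (\<lambda>x y. add x y \<inter> S) {x} (add y w \<inter> S)"
      by (simp add: Int_absorb2 restrict hadd_assoc)
  next
    fix x assume "x \<in> S"
    show "\<exists>!y. y \<in> S \<and> z \<in> add x y \<inter> S"
    proof (rule ex1I[of _ "neg x"])
      show "neg x \<in> S \<and> z \<in> add x (neg x) \<inter> S"
        using assms \<open>x \<in> S\<close> zero_mem_hadd_neg by blast
    qed (use neg_unique in blast)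
  qed (use assms(1) in \<open>auto simp: hadd_commute intro: reversibility\<close>)
qed

end

locale superiorly_canonical_hypergroup = canonical_hypergroup_univ +
  assumes hadd_eq_singleton: "x \<in> add x y \<Longrightarrow> add x y = {x}"
    and hadd_linear: "add x y \<inter> add w t \<noteq> {} \<Longrightarrow> add x y \<subseteq> add w t \<or> add w t \<subseteq> add x y"
    and self_diff_eq_on_diff:
      "x \<noteq> y \<Longrightarrow> w \<in> hminus add z x y \<Longrightarrow> t \<in> hminus add z x y \<Longrightarrow>
         hminus add z w w = hminus add z t t"
    and self_diff_subset_outside:
      "\<And>x y w. x \<in> hminus add z w w \<Longrightarrow> y \<notin> hminus add z w w \<Longrightarrow>
         hminus add z x x \<subseteq> hminus add z y y"

lemma superiorly_canonical_hypergroup_iff: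
  "superiorly_canonical_hypergroup add z \<longleftrightarrow> superiorly_canonical add z"
  unfolding superiorly_canonical_hypergroup_def superiorly_canonical_hypergroup_axioms_def
    superiorly_canonical_def canonical_hypergroup_univ_iff
  by simp

context superiorly_canonical_hypergroup
begin

lemma hadd_self_diff: "y \<in> diff x x \<Longrightarrow> add x y = {x}"
  using mem_self_diff_iff hadd_eq_singleton by blast

lemma not_mem_self_diff: "x \<noteq> z \<Longrightarrow> x \<notin> diff x x"
proof
  assume "x \<noteq> z" "x \<in> diff x x"
  hence "neg x \<in> add x (neg x)"
    using reversibility[of x x "neg x" "neg x"] zero_mem_hadd_neg by (simp add: diff_eq)
  hence "add x (neg x) = {x}" using hadd_self_diff by (simp add: diff_eq)
  thus False using zero_mem_hadd_neg[of x] \<open>x \<noteq> z\<close> by auto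
qed

lemma self_diff_linear: "diff a a \<subseteq> diff b b \<or> diff b b \<subseteq> diff a a"
  using hadd_linear[of a "neg a" b "neg b"] zero_mem_self_diff by (auto simp: diff_eq)

lemma self_diff_hadd_closed:
  assumes "a \<in> diff c c" and "b \<in> diff c c" and "u \<in> add a b"
  shows "u \<in> diff c c"
proof -
  have "add c u \<subseteq> hsum add {c} (add a b)" using assms(3) by (auto simp: mem_hsum_iff)
  also have "\<dots> = hsum add (add c a) {b}" using hadd_assoc by simp
  also have "\<dots> = add c b" using hadd_self_diff[OF assms(1)] by (simp add: hsum_def)
  also have "\<dots> = {c}" using hadd_self_diff[OF assms(2)] .
  finally have "c \<in> add c u" using hadd_nonempty by blast
  thus ?thesis using mem_self_diff_iff by blast
qed

lemma hadd_perturb_subset: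
  assumes "q \<in> diff y y" and "w \<in> add x y"
  shows "add w q \<subseteq> add x y"
proof -
  have "add w q \<subseteq> hsum add (add x y) {q}" using assms(2) by (auto simp: mem_hsum_iff)
  also have "\<dots> = hsum add {x} (add y q)" by (rule hadd_assoc)
  also have "\<dots> = add x y" using hadd_self_diff[OF assms(1)] by (simp add: hsum_def)
  finally show ?thesis .
qed

lemma self_diff_eq_on_hadd:
  assumes "z \<notin> add x y" and "t \<in> add x y" and "w \<in> add x y"
  shows "diff t t = diff w w"
proof -
  have "x \<noteq> neg y"
  proof
    assume "x = neg y"
    hence "z \<in> add x y" using zero_mem_hadd_neg[of y] hadd_commute[of y "neg y"] by simp
    with assms(1) show False by contradiction
  qed
  thus ?thesis using self_diff_eq_on_diff[of x "neg y" t w] assms(2,3) by (simp add: diff_eq)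
qed

text \<open>Forward: \<open>w - t \<subseteq> w - x - y \<subseteq> (x - x) + (y - y)\<close>. Backward: \<open>t \<in> w - s\<close> for some
  \<open>s \<in> c - c\<close>, and adding an element of \<open>c - c\<close> does not leave \<open>x + y\<close>.\<close>

lemma mem_hadd_iff_diff_subset:
  assumes w: "w \<in> add x y" and x: "diff x x \<subseteq> diff c c" and y: "diff y y \<subseteq> diff c c"
    and c: "c = x \<or> c = y"
  shows "t \<in> add x y \<longleftrightarrow> diff w t \<subseteq> diff c c"
proof
  assume t: "t \<in> add x y"
  show "diff w t \<subseteq> diff c c"
  proof
    fix s assume "s \<in> diff w t"
    hence "s \<in> hsum add {w} (add (neg x) (neg y))"
      using neg_mem_hadd_neg[OF t] by (auto simp: diff_eq mem_hsum_iff)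
    then obtain a where a: "a \<in> add w (neg x)" and s: "s \<in> add a (neg y)"
      by (auto simp: hadd_assoc[symmetric] mem_hsum_iff)
    have "a \<in> hsum add {y} (add x (neg x))"
      using a w by (auto simp: hadd_assoc[symmetric] hadd_commute[of x y] mem_hsum_iff)
    then obtain a' where a': "a' \<in> diff x x" "a \<in> add y a'"
      by (auto simp: diff_eq mem_hsum_iff)
    have "s \<in> hsum add {a'} (add y (neg y))"
      using s a'(2) by (auto simp: hadd_assoc[symmetric] hadd_commute[of y a'] mem_hsum_iff)
    then obtain b where "b \<in> diff y y" "s \<in> add a' b"
      by (auto simp: diff_eq mem_hsum_iff)
    thus "s \<in> diff c c" using self_diff_hadd_closed a'(1) x y by blast
  qed
next
  assume sub: "diff w t \<subseteq> diff c c"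
  obtain s where s: "s \<in> diff w t" using hadd_nonempty diff_eq by blast
  have "w \<in> add s t"
    using reversibility[of s "neg t" w t] s zero_mem_hadd_neg[of "neg t"]
    by (simp add: diff_eq hadd_commute)
  hence "t \<in> add w (neg s)" using reversibility zero_mem_hadd_neg by blast
  moreover have "neg s \<in> diff c c" using neg_mem_self_diff s sub by blast
  ultimately show "t \<in> add x y"
  proof (cases "c = y")
    case False
    with c \<open>neg s \<in> diff c c\<close> have "neg s \<in> diff x x" by simp
    moreover have "w \<in> add y x" using w hadd_commute[of x y] by simp
    ultimately have "add w (neg s) \<subseteq> add y x" by (rule hadd_perturb_subset)
    with \<open>t \<in> add w (neg s)\<close> show ?thesis using hadd_commute[of x y] by auto
  qed (use hadd_perturb_subset w in blast)
qed

end

locale hyperfield_univ = canonical_hypergroup_univ +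
  fixes mul :: "'a \<Rightarrow> 'a \<Rightarrow> 'a" and one :: 'a
  assumes hmul_assoc: "\<And>x y w. mul (mul x y) w = mul x (mul y w)"
    and hmul_commute: "\<And>x y. mul x y = mul y x"
    and hmul_zero_left [simp]: "\<And>x. mul z x = z"
    and hmul_hadd_distrib: "\<And>x y w. mul x ` add y w = add (mul x y) (mul x w)"
    and one_neq_zero: "one \<noteq> z"
    and hmul_one_left [simp]: "\<And>x. mul one x = x"
    and hmul_nonzero: "\<And>x y. x \<noteq> z \<Longrightarrow> y \<noteq> z \<Longrightarrow> mul x y \<noteq> z"
    and ex_hmul_inverse: "\<And>x. x \<noteq> z \<Longrightarrow> \<exists>y. mul x y = one"

lemma hyperfield_univ_iff: "hyperfield_univ add z mul one \<longleftrightarrow> hyperfield add mul z one"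
  unfolding hyperfield_univ_def hyperfield_univ_axioms_def hyperfield_def hyperring_def
    canonical_hypergroup_univ_iff
  by simp

context hyperfield_univ
begin

abbreviation hinverse :: "'a \<Rightarrow> 'a" where "hinverse x \<equiv> hinv mul one x"

lemma hmul_zero_right [simp]: "mul x z = z"
  using hmul_commute hmul_zero_left by metis

lemma hmul_one_right [simp]: "mul x one = x"
  using hmul_commute hmul_one_left by metis

lemma hmul_hinverse: "x \<noteq> z \<Longrightarrow> mul x (hinverse x) = one"
  unfolding hinv_def by (rule theI') (metis ex_hmul_inverse hmul_assoc hmul_commute hmul_one_left)

lemma hmul_hinverse_cancel: "x \<noteq> z \<Longrightarrow> mul x (mul (hinverse x) y) = y"
  by (metis hmul_assoc hmul_hinverse hmul_one_left)

lemma hinverse_hmul_cancel: "x \<noteq> z \<Longrightarrow> mul (hinverse x) (mul x y) = y"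
  by (metis hmul_assoc hmul_commute hmul_hinverse hmul_one_left)

lemma hmul_image_subset_iff: "a \<noteq> z \<Longrightarrow> mul a ` X \<subseteq> mul a ` Y \<longleftrightarrow> X \<subseteq> Y"
  by (metis hinverse_hmul_cancel inj_image_subset_iff inj_on_inverseI)

lemma neg_hmul: "neg (mul a x) = mul a (neg x)"
proof -
  have "z \<in> mul a ` add x (neg x)"
    using zero_mem_hadd_neg[of x] by (metis image_eqI hmul_zero_right)
  thus ?thesis using hmul_hadd_distrib neg_unique by metis
qed

lemma self_diff_hmul: "diff (mul a x) (mul a x) = mul a ` diff x x"
  by (simp add: diff_eq neg_hmul hmul_hadd_distrib)

lemma self_diff_eq_image: "diff x x = mul x ` diff one one"
  using self_diff_hmul[of x one] by simp

lemma self_diff_subset_iff: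
  assumes "a \<noteq> z"
  shows "diff b b \<subseteq> diff a a \<longleftrightarrow> diff (mul (hinverse a) b) (mul (hinverse a) b) \<subseteq> diff one one"
proof -
  let ?q = "mul (hinverse a) b"
  have "diff b b = mul a ` diff ?q ?q"
    using self_diff_hmul[of a ?q] hmul_hinverse_cancel[OF assms] by simp
  moreover have "diff a a = mul a ` diff one one" by (rule self_diff_eq_image)
  ultimately show ?thesis using hmul_image_subset_iff[OF assms] by simp
qed

lemma mem_self_diff_iff_hinverse:
  assumes "c \<noteq> z"
  shows "s \<in> diff c c \<longleftrightarrow> mul (hinverse c) s \<in> diff one one"
  using self_diff_eq_image[of c] hmul_hinverse_cancel[OF assms] hinverse_hmul_cancel[OF assms]
  by (metis image_iff)

lemma relational_subhyperring_closed:
  assumes "z \<in> S" and hadd_closed: "\<And>x y. x \<in> S \<Longrightarrow> y \<in> S \<Longrightarrow> add x y \<subseteq> S"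
    and "\<And>x. x \<in> S \<Longrightarrow> neg x \<in> S" and hmul_closed: "\<And>x y. x \<in> S \<Longrightarrow> y \<in> S \<Longrightarrow> mul x y \<in> S"
  shows "relational_subhyperring add mul z S"
  unfolding relational_subhyperring_def hyperring_def
proof (intro conjI ballI canonical_hypergroup_restrict assms)
  fix x y w assume "x \<in> S" "y \<in> S" "w \<in> S"
  thus "mul x ` (add y w \<inter> S) = add (mul x y) (mul x w) \<inter> S"
    using hadd_closed hmul_closed hmul_hadd_distrib by (simp add: Int_absorb2)
qed (use hmul_assoc hmul_commute hmul_closed in auto)

end

locale superiorly_canonical_hyperfield =
  superiorly_canonical_hypergroup add z + hyperfield_univ add z mul one for add z mul one
begin

abbreviation \<O> :: "'a set" where "\<O> \<equiv> {x. diff x x \<subseteq> diff one one}"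

lemma mem_O_iff: "x \<in> \<O> \<longleftrightarrow> mul x ` diff one one \<subseteq> diff one one"
  using self_diff_eq_image[of x] by simp

lemma O_hadd_closed:
  assumes "a \<in> \<O>" and "b \<in> \<O>"
  shows "add a b \<subseteq> \<O>"
proof
  fix u assume u: "u \<in> add a b"
  have "mul u s \<in> diff one one" if s: "s \<in> diff one one" for s
  proof -
    have "mul u s \<in> add (mul s a) (mul s b)"
      using u hmul_hadd_distrib[of s a b] hmul_commute[of u s] by auto
    moreover have "mul s a \<in> diff one one" "mul s b \<in> diff one one"
      using assms s hmul_commute[of s a] hmul_commute[of s b] unfolding mem_O_iff by auto
    ultimately show ?thesis using self_diff_hadd_closed by blast
  qed
  thus "u \<in> \<O>" unfolding mem_O_iff by auto
qed

lemma O_hmul_closed: "a \<in> \<O> \<Longrightarrow> b \<in> \<O> \<Longrightarrow> mul a b \<in> \<O>"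
  using self_diff_hmul[of a b] self_diff_eq_image[of a] by auto

lemma O_neg_closed: "x \<in> \<O> \<Longrightarrow> neg x \<in> \<O>"
  by simp

lemma zero_mem_O: "z \<in> \<O>"
  by (simp add: self_diff_zero)

lemma mem_O_or_hinverse_mem_O: "x \<noteq> z \<Longrightarrow> x \<in> \<O> \<or> hinverse x \<in> \<O>"
  using self_diff_linear[of x one] self_diff_subset_iff[of x one] by auto

lemma valuation_hyperring_O: "valuation_hyperring add mul z one \<O>"
  unfolding valuation_hyperring_def
  using relational_subhyperring_closed[OF zero_mem_O O_hadd_closed O_neg_closed O_hmul_closed]
    mem_O_or_hinverse_mem_O
  by blast

end

locale superiorly_canonical_valued_hyperfield =
  superiorly_canonical_hyperfield add z mul one for add z mul one +
  fixes v :: "'a \<Rightarrow> ('g::linordered_ab_group_add) extended"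
  assumes valuation: "valuation add mul z v"
    and valuation_ring_eq: "valuation_ring v = {x. hminus add z x x \<subseteq> hminus add z one one}"
begin

lemma val_eq_Pinf_iff: "v x = Pinf \<longleftrightarrow> x = z"
  using valuation unfolding valuation_def by blast

lemma val_zero [simp]: "v z = Pinf"
  using val_eq_Pinf_iff by simp

lemma nonzero_of_val_Fin: "v x = Fin \<gamma> \<Longrightarrow> x \<noteq> z"
  using val_eq_Pinf_iff by force

lemma val_hmul: "v (mul x y) = v x + v y"
  using valuation unfolding valuation_def by blast

lemma val_Fin: "x \<noteq> z \<Longrightarrow> \<exists>\<gamma>. v x = Fin \<gamma>"
  using valuation val_eq_Pinf_iff unfolding valuation_def by (metis image_iff insert_iff rangeI)

lemma ex_val_eq_Fin: "\<exists>x. v x = Fin \<gamma>"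
  using valuation unfolding valuation_def by (metis image_iff insertCI rangeI)

lemma mem_O_iff_val: "x \<in> \<O> \<longleftrightarrow> 0 \<le> v x"
  using valuation_ring_eq unfolding valuation_ring_def by blast

lemma val_one: "v one = 0"
proof -
  obtain \<gamma> where \<gamma>: "v one = Fin \<gamma>" using val_Fin one_neq_zero by blast
  have "Fin \<gamma> = Fin \<gamma> + Fin \<gamma>" using val_hmul[of one one] \<gamma> by simp
  thus ?thesis using \<gamma> by (simp add: zero_extended_def)
qed

lemma val_hinverse: "x \<noteq> z \<Longrightarrow> v x = Fin \<alpha> \<Longrightarrow> v (hinverse x) = Fin (- \<alpha>)"
proof -
  assume x: "x \<noteq> z" and \<alpha>: "v x = Fin \<alpha>"
  have "hinverse x \<noteq> z" using hmul_hinverse[OF x] one_neq_zero hmul_zero_right by metis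
  then obtain \<iota> where \<iota>: "v (hinverse x) = Fin \<iota>" using val_Fin by blast
  have "Fin (\<alpha> + \<iota>) = 0" using val_hmul[of x "hinverse x"] hmul_hinverse[OF x] val_one \<alpha> \<iota> by simp
  hence "\<iota> = - \<alpha>" by (simp add: zero_extended_def eq_neg_iff_add_eq_0 add.commute)
  thus ?thesis using \<iota> by simp
qed

lemma val_hinverse_hmul:
  "x \<noteq> z \<Longrightarrow> v x = Fin \<alpha> \<Longrightarrow> v y = Fin \<beta> \<Longrightarrow> v (mul (hinverse x) y) = Fin (\<beta> - \<alpha>)"
  using val_hmul val_hinverse by simp

lemma val_le_iff_self_diff_subset:
  assumes "a \<noteq> z" and "b \<noteq> z"
  shows "v a \<le> v b \<longleftrightarrow> diff b b \<subseteq> diff a a"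
proof -
  obtain \<alpha> \<beta> where \<alpha>: "v a = Fin \<alpha>" and \<beta>: "v b = Fin \<beta>" using val_Fin assms by metis
  have "diff b b \<subseteq> diff a a \<longleftrightarrow> mul (hinverse a) b \<in> \<O>"
    using self_diff_subset_iff[OF assms(1)] by simp
  also have "\<dots> \<longleftrightarrow> \<alpha> \<le> \<beta>"
    unfolding mem_O_iff_val val_hinverse_hmul[OF assms(1) \<alpha> \<beta>] by (simp add: zero_extended_def)
  finally show ?thesis using \<alpha> \<beta> by simp
qed

lemma val_eq_iff_self_diff_eq:
  assumes "a \<noteq> z" and "b \<noteq> z"
  shows "v a = v b \<longleftrightarrow> diff a a = diff b b"
  using val_le_iff_self_diff_subset[OF assms] val_le_iff_self_diff_subset[OF assms(2,1)]
  by (metis order.eq_iff subset_antisym)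

lemma self_diff_subset_of_val_le: "c \<noteq> z \<Longrightarrow> v c \<le> v u \<Longrightarrow> diff u u \<subseteq> diff c c"
  by (cases "u = z") (simp_all add: self_diff_zero val_le_iff_self_diff_subset)

lemma mem_self_diff_one_val_invariant:
  assumes "s \<noteq> z" and "v s' = v s" and "s \<in> diff one one"
  shows "s' \<in> diff one one"
proof -
  obtain \<sigma> where \<sigma>: "v s = Fin \<sigma>" using val_Fin assms(1) by blast
  define u where "u = mul (hinverse s) s'"
  have "v u = v one" unfolding u_def
    using val_hinverse_hmul[OF assms(1) \<sigma>] assms(2) \<sigma> val_one by (simp add: zero_extended_def)
  moreover have "u \<noteq> z" using calculation val_one by (auto simp: zero_extended_def dest: nonzero_of_val_Fin)
  ultimately have "diff u u = diff one one" using val_eq_iff_self_diff_eq one_neq_zero by blast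
  moreover have "s' = mul u s" unfolding u_def using hmul_hinverse_cancel[OF assms(1)] hmul_commute by metis
  ultimately show ?thesis using assms(3) self_diff_eq_image[of u] by auto
qed

text \<open>Since membership of \<open>s \<noteq> 0\<close> in \<open>1 - 1\<close> depends only on \<open>v s\<close>, this is exactly the
  complement of \<open>v(1 - 1)\<close> in the value group.\<close>

definition krasner_norm :: "'g set" where
  "krasner_norm = {\<gamma>. \<forall>s. v s = Fin \<gamma> \<longrightarrow> s \<notin> diff one one}"

lemma not_mem_krasner_norm_iff:
  assumes "v s = Fin \<sigma>"
  shows "\<sigma> \<notin> krasner_norm \<longleftrightarrow> s \<in> diff one one"
proof
  assume "\<sigma> \<notin> krasner_norm"
  then obtain s' where s': "v s' = Fin \<sigma>" "s' \<in> diff one one" unfolding krasner_norm_def by blast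
  moreover have "s' \<noteq> z" using s'(1) by (rule nonzero_of_val_Fin)
  ultimately show "s \<in> diff one one" using mem_self_diff_one_val_invariant assms by metis
next
  assume "s \<in> diff one one"
  thus "\<sigma> \<notin> krasner_norm" using assms unfolding krasner_norm_def by blast
qed

lemma initial_segment_krasner_norm: "initial_segment krasner_norm"
  unfolding initial_segment_def
proof (intro ballI allI impI)
  fix \<delta> \<gamma> assume \<delta>: "\<delta> \<in> krasner_norm" and "\<gamma> < \<delta>"
  show "\<gamma> \<in> krasner_norm"
  proof (rule ccontr)
    assume "\<gamma> \<notin> krasner_norm"
    obtain s s0 where s: "v s = Fin \<gamma>" and s0: "v s0 = Fin \<delta>" using ex_val_eq_Fin by metis
    have "diff s s \<subseteq> diff s0 s0"
      using \<delta> \<open>\<gamma> \<notin> krasner_norm\<close> s s0 not_mem_krasner_norm_iff self_diff_subset_outside by blast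
    moreover have "s \<noteq> z" "s0 \<noteq> z" using s s0 by (auto dest: nonzero_of_val_Fin)
    ultimately have "v s0 \<le> v s" using val_le_iff_self_diff_subset by blast
    with s s0 \<open>\<gamma> < \<delta>\<close> show False by simp
  qed
qed

lemma zero_mem_krasner_norm: "0 \<in> krasner_norm"
proof (rule ccontr)
  assume "0 \<notin> krasner_norm"
  obtain s where s: "v s = Fin 0" using ex_val_eq_Fin by blast
  hence "s \<noteq> z" and "v s = v one" using nonzero_of_val_Fin val_one by (auto simp: zero_extended_def)
  hence "diff s s = diff one one" using val_eq_iff_self_diff_eq one_neq_zero by blast
  moreover have "s \<in> diff one one" using \<open>0 \<notin> krasner_norm\<close> s not_mem_krasner_norm_iff by blast
  ultimately show False using not_mem_self_diff \<open>s \<noteq> z\<close> by blast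
qed

lemma above_krasner_norm_iff:
  assumes "c \<noteq> z"
  shows "above_seg (v s) krasner_norm (v c) \<longleftrightarrow> s \<in> diff c c"
proof -
  obtain \<gamma> where \<gamma>: "v c = Fin \<gamma>" using val_Fin assms by blast
  show ?thesis
  proof (cases "s = z")
    case True
    thus ?thesis using \<gamma> above_seg_Pinf by simp
  next
    case False
    then obtain \<sigma> where \<sigma>: "v s = Fin \<sigma>" using val_Fin by blast
    have "above_seg (v s) krasner_norm (v c) \<longleftrightarrow> mul (hinverse c) s \<in> diff one one"
      using not_mem_krasner_norm_iff val_hinverse_hmul[OF assms \<gamma> \<sigma>] \<sigma> \<gamma>
      by (simp add: above_seg_Fin_iff)
    also have "\<dots> \<longleftrightarrow> s \<in> diff c c" using mem_self_diff_iff_hinverse[OF assms] by simp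
    finally show ?thesis .
  qed
qed

lemma val_const_on_hadd:
  assumes "z \<notin> add x y"
  shows "\<exists>\<gamma>. v ` add x y = {\<gamma>}"
proof -
  obtain w where w: "w \<in> add x y" using hadd_nonempty by blast
  have "v t = v w" if "t \<in> add x y" for t
    using self_diff_eq_on_hadd[OF assms that w] val_eq_iff_self_diff_eq assms that w by metis
  thus ?thesis using w by blast
qed

lemma mem_hadd_iff_above_krasner_norm:
  assumes "\<not> (x = z \<and> y = z)" and "w \<in> add x y"
  shows "t \<in> add x y \<longleftrightarrow> (\<forall>s\<in>diff w t. above_seg (v s) krasner_norm (min (v x) (v y)))"
proof -
  define c where "c = (if v x \<le> v y then x else y)"
  have c: "c = x \<or> c = y" and vc: "v c = min (v x) (v y)" by (simp_all add: c_def min_def)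
  have "c \<noteq> z"
  proof
    assume "c = z"
    hence "min (v x) (v y) = Pinf" using vc by simp
    hence "x = z \<and> y = z" using val_eq_Pinf_iff by (simp add: min_def split: if_splits)
    with assms(1) show False by contradiction
  qed
  have "diff x x \<subseteq> diff c c" "diff y y \<subseteq> diff c c"
    using self_diff_subset_of_val_le[OF \<open>c \<noteq> z\<close>] vc by simp_all
  hence "t \<in> add x y \<longleftrightarrow> diff w t \<subseteq> diff c c"
    using mem_hadd_iff_diff_subset[OF assms(2) _ _ c] by blast
  thus ?thesis unfolding vc[symmetric] above_krasner_norm_iff[OF \<open>c \<noteq> z\<close>] by blast
qed

lemma krasner_valued_hyperfield: "krasner_valued_hyperfield add mul z one v"
proof -
  have "hyperfield add mul z one"
    unfolding hyperfield_univ_iff[symmetric] by unfold_locales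
  thus ?thesis
    unfolding krasner_valued_hyperfield_def
    using valuation val_const_on_hadd initial_segment_krasner_norm zero_mem_krasner_norm
      mem_hadd_iff_above_krasner_norm
    by blast
qed

end

theorem proposition4p23:
  fixes add :: "'a \<Rightarrow> 'a \<Rightarrow> 'a set" and mul :: "'a \<Rightarrow> 'a \<Rightarrow> 'a" and z one :: 'a
  assumes "hyperfield add mul z one"
    and "superiorly_canonical add z"
  shows "valuation_hyperring add mul z one {x. hminus add z x x \<subseteq> hminus add z one one} \<and>
         (\<forall>v :: 'a \<Rightarrow> ('g::linordered_ab_group_add) extended.
           valuation add mul z v \<longrightarrow>
           valuation_ring v = {x. hminus add z x x \<subseteq> hminus add z one one} \<longrightarrow>
           krasner_valued_hyperfield add mul z one v)"
proof -
  interpret superiorly_canonical_hyperfield add z mul one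
    using assms by (simp add: superiorly_canonical_hyperfield_def
        superiorly_canonical_hypergroup_iff hyperfield_univ_iff)
  have "krasner_valued_hyperfield add mul z one v"
    if "valuation add mul z v" and "valuation_ring v = \<O>" for v :: "'a \<Rightarrow> 'g extended"
  proof -
    interpret superiorly_canonical_valued_hyperfield add z mul one v
      using that by unfold_locales
    show ?thesis by (rule krasner_valued_hyperfield)
  qed
  thus ?thesis using valuation_hyperring_O by blast
qed

end
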